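(* Let $P$ be a probability distribution of a random variable $\xi$, let $\mathcal X\subseteq\mathbb R^d$, and let $\lambda>0$. Assume: (i) for every $\xi$, $x\mapsto \ell(x;\xi)$ is $G$-Lipschitz continuous and $L$-smooth on $\mathcal X$; (ii) $\psi:\mathbb R\to[0,+\infty]$ is convex, $\psi(1)=0$, $\psi(t)=+\infty$ for all $t<0$, and $\psi^*(t)=\sup_{s}(st-\psi(s))$ is $M$-smooth. Define $$\mathcal L(x,\eta)=\mathbb E_{\xi\sim P}\Big[\lambda\psi^*\Big(\frac{\ell(x;\xi)-\eta}{\lambda}\Big)+\eta\Big],\quad \Psi(x)=\min_{\eta\in\mathbb R}\mathcal L(x,\eta),\quad \widehat{\mathcal L}(x,\eta)=\mathcal L(x,G\eta).$$ If for some $(x,\eta)$ we have $\|\nabla_x\mathcal L(x,\eta)\|+G|\nabla_\eta\mathcal L(x,\eta)|\le\epsilon$, then $\|\nabla\Psi(x)\|\le\epsilon$. Furthermore, if $\|\nabla\widehat{\mathcal L}(x,\eta)\|\le\epsilon/\sqrt2$, then $\|\nabla\Psi(x)\|\le\epsilon$.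
   Context: $\Psi$ is differentiable under these assumptions. A point $x$ with $\|\nabla\Psi(x)\|\le\epsilon$ is called an $\epsilon$-stationary point of $\Psi$. Norms are Euclidean. *)

theory Defs
  imports "HOL-Analysis.Analysis" "HOL-Probability.Probability"
begin

text \<open>Gradient of a function on a real inner product space (meaningful where differentiable).\<close>
definition grad :: "('a::real_inner \<Rightarrow> real) \<Rightarrow> 'a \<Rightarrow> 'a" where
  "grad f x = (SOME g. (f has_derivative (\<lambda>h. g \<bullet> h)) (at x))"

definition smooth_on :: "real \<Rightarrow> ('a::real_inner \<Rightarrow> real) \<Rightarrow> 'a set \<Rightarrow> bool" where
  "smooth_on L f S \<longleftrightarrow> (\<forall>x\<in>S. f differentiable (at x)) \<and>
     (\<forall>x\<in>S. \<forall>y\<in>S. norm (grad f x - grad f y) \<le> L * norm (x - y))"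

definition ereal_convex :: "(real \<Rightarrow> ereal) \<Rightarrow> bool" where
  "ereal_convex f \<longleftrightarrow> (\<forall>s t a. 0 \<le> a \<and> a \<le> 1 \<longrightarrow>
      f (a * s + (1 - a) * t) \<le> ereal a * f s + ereal (1 - a) * f t)"

definition conj_ereal :: "(real \<Rightarrow> ereal) \<Rightarrow> real \<Rightarrow> ereal" where
  "conj_ereal \<psi> t = (SUP s. ereal (s * t) - \<psi> s)"

text \<open>Real-valued version of the conjugate (used when it is finite).\<close>
definition conj_real :: "(real \<Rightarrow> ereal) \<Rightarrow> real \<Rightarrow> real" where
  "conj_real \<psi> t = real_of_ereal (conj_ereal \<psi> t)"

definition Lobj :: "'b measure \<Rightarrow> ('a \<Rightarrow> 'b \<Rightarrow> real) \<Rightarrow> (real \<Rightarrow> ereal) \<Rightarrow> real \<Rightarrow> 'a \<Rightarrow> real \<Rightarrow> real" where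
  "Lobj P l \<psi> lam x \<eta> = (\<integral>\<xi>. lam * conj_real \<psi> ((l x \<xi> - \<eta>) / lam) + \<eta> \<partial>P)"

definition PsiF :: "'b measure \<Rightarrow> ('a \<Rightarrow> 'b \<Rightarrow> real) \<Rightarrow> (real \<Rightarrow> ereal) \<Rightarrow> real \<Rightarrow> 'a \<Rightarrow> real" where
  "PsiF P l \<psi> lam x = (INF \<eta>. Lobj P l \<psi> lam x \<eta>)"

end

theory Submission
  imports Defs
begin

text \<open>Write \<open>\<phi> = \<psi>\<^sup>*\<close>. Because \<open>\<psi>(1) = 0\<close> and \<open>\<psi> = \<infinity>\<close> on the negative axis, \<open>\<phi>\<close> is
  convex and nondecreasing with \<open>0 \<le> \<phi>'\<close>, and \<open>\<phi>'\<close> is \<open>M\<close>-Lipschitz. Hence \<open>\<eta> \<mapsto> \<L>(x,\<eta>)\<close>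
  is convex with derivative \<open>1 - E \<phi>'((l(x;\<xi>) - \<eta>)/\<lambda>)\<close>, so for \<open>r > 0\<close> there is an \<open>\<eta>'\<close> with
  \<open>\<L>(x,\<eta>') < \<Psi>(x) + r\<^sup>2\<close> and \<open>\<bar>\<nabla>\<^sub>\<eta>\<L>(x,\<eta>')\<bar> \<le> r\<close>. Taking \<open>r = \<parallel>y - x\<parallel>\<close>, the bound
  \<open>\<Psi>(y) \<le> \<L>(y,\<eta>')\<close> and a first-order expansion of \<open>\<L>\<close> in \<open>y\<close>, transported from \<open>\<eta>'\<close> to \<open>\<eta>\<close>
  using the monotonicity of \<open>\<phi>'\<close> and the \<open>G\<close>-Lipschitz continuity of \<open>l\<close>, give
  \<open>\<Psi>(y) - \<Psi>(x) \<le> \<L>(y,\<eta>) - \<L>(x,\<eta>) + G\<bar>\<nabla>\<^sub>\<eta>\<L>(x,\<eta>)\<bar>\<parallel>y - x\<parallel> + O(\<parallel>y - x\<parallel>\<^sup>2)\<close>.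
  Differentiating along \<open>y = x + t(\<nabla>\<Psi>(x) - \<nabla>\<^sub>x\<L>(x,\<eta>))\<close> yields
  \<open>\<parallel>\<nabla>\<Psi>(x)\<parallel> \<le> \<parallel>\<nabla>\<^sub>x\<L>(x,\<eta>)\<parallel> + G\<bar>\<nabla>\<^sub>\<eta>\<L>(x,\<eta>)\<bar>\<close>. For the rescaled objective the two partial
  gradients are \<open>\<nabla>\<^sub>x\<L>\<close> and \<open>G \<nabla>\<^sub>\<eta>\<L>\<close>, and \<open>\<parallel>a\<parallel> + \<bar>b\<bar> \<le> \<surd>2 \<parallel>(a,b)\<parallel>\<close>.\<close>

lemma grad_has_derivative:
  fixes f :: "'a::euclidean_space \<Rightarrow> real"
  assumes "f differentiable (at x)"
  shows "(f has_derivative (\<lambda>h. grad f x \<bullet> h)) (at x)"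
proof -
  obtain D where D: "(f has_derivative D) (at x)"
    using assms by (auto simp: differentiable_def)
  \<comment> \<open>the Riesz representative of \<open>D\<close>\<close>
  have "D = (\<lambda>h. adjoint D 1 \<bullet> h)"
    using adjoint_works[OF has_derivative_linear[OF D], of _ 1] by (simp add: fun_eq_iff inner_commute)
  then show ?thesis
    unfolding grad_def using D by (metis (mono_tags) someI)
qed

lemma grad_unique:
  fixes f :: "'a::euclidean_space \<Rightarrow> real"
  assumes "(f has_derivative (\<lambda>h. g \<bullet> h)) (at x)"
  shows "grad f x = g"
proof -
  have "f differentiable (at x)"
    using assms by (auto simp: differentiable_def)
  then have "(\<lambda>h. grad f x \<bullet> h) = (\<lambda>h. g \<bullet> h)"
    using has_derivative_unique[OF grad_has_derivative assms] by blast
  then have "(grad f x - g) \<bullet> (grad f x - g) = 0"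
    by (metis inner_diff_left right_minus_eq)
  then show ?thesis by simp
qed

lemma grad_has_real_derivative:
  fixes f :: "real \<Rightarrow> real"
  assumes "f differentiable (at x)"
  shows "(f has_real_derivative grad f x) (at x)"
  using grad_has_derivative[OF assms] by (simp add: has_field_derivative_def mult_commute_abs)

lemma grad_real_unique:
  fixes f :: "real \<Rightarrow> real"
  assumes "(f has_real_derivative D) (at x)"
  shows "grad f x = D"
  using assms by (intro grad_unique) (simp add: has_field_derivative_def mult_commute_abs)

lemma has_derivative_partials:
  fixes F :: "'a::real_inner \<times> 'b::real_inner \<Rightarrow> real"
  assumes "(F has_derivative (\<lambda>h. w \<bullet> h)) (at (x, e))"
  shows "((\<lambda>y. F (y, e)) has_derivative (\<lambda>h. fst w \<bullet> h)) (at x)"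
    and "((\<lambda>t. F (x, t)) has_derivative (\<lambda>k. snd w \<bullet> k)) (at e)"
proof -
  have "((\<lambda>y. (y, e)) has_derivative (\<lambda>h. (h, 0))) (at x)"
    by (auto intro!: derivative_eq_intros)
  from has_derivative_compose[OF this assms]
  show "((\<lambda>y. F (y, e)) has_derivative (\<lambda>h. fst w \<bullet> h)) (at x)"
    by (simp add: inner_prod_def)
  have "((\<lambda>t. (x, t)) has_derivative (\<lambda>k. (0, k))) (at e)"
    by (auto intro!: derivative_eq_intros)
  from has_derivative_compose[OF this assms]
  show "((\<lambda>t. F (x, t)) has_derivative (\<lambda>k. snd w \<bullet> k)) (at e)"
    by (simp add: inner_prod_def)
qed

lemma norm_fst_add_norm_snd_le:
  fixes z :: "'a::real_normed_vector \<times> 'b::real_normed_vector"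
  shows "norm (fst z) + norm (snd z) \<le> sqrt 2 * norm z"
proof -
  have "(norm (fst z) + norm (snd z))\<^sup>2 \<le> 2 * ((norm (fst z))\<^sup>2 + (norm (snd z))\<^sup>2)"
    using sum_squares_bound[of "norm (fst z)" "norm (snd z)"] by (simp add: power2_sum)
  then have "norm (fst z) + norm (snd z) \<le> sqrt (2 * ((norm (fst z))\<^sup>2 + (norm (snd z))\<^sup>2))"
    by (rule real_le_rsqrt)
  also have "\<dots> = sqrt 2 * norm z"
    by (simp add: norm_prod_def real_sqrt_mult[symmetric])
  finally show ?thesis .
qed

lemma has_derivative_of_quadratic_remainder:
  fixes f :: "'a::real_normed_vector \<Rightarrow> 'b::real_normed_vector"
  assumes "bounded_linear D"
    and remainder: "\<And>h. norm (f (x + h) - f x - D h) \<le> K * (norm h)\<^sup>2"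
  shows "(f has_derivative D) (at x)"
  unfolding has_derivative_within_alt
proof (intro conjI allI impI assms)
  fix e :: real assume "e > 0"
  show "\<exists>d>0. \<forall>y\<in>UNIV. norm (y - x) < d \<longrightarrow> norm (f y - f x - D (y - x)) \<le> e * norm (y - x)"
  proof (intro exI[of _ "e / (\<bar>K\<bar> + 1)"] conjI ballI impI)
    show "e / (\<bar>K\<bar> + 1) > 0" using \<open>e > 0\<close> by simp
    fix y assume y: "norm (y - x) < e / (\<bar>K\<bar> + 1)"
    have "(\<bar>K\<bar> + 1) * norm (y - x) \<le> e"
      using y by (simp add: field_simps)
    moreover have "\<bar>K\<bar> * norm (y - x) \<le> (\<bar>K\<bar> + 1) * norm (y - x)"
      by (simp add: mult_right_mono)
    ultimately have "\<bar>K\<bar> * norm (y - x) \<le> e"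
      by linarith
    then have "\<bar>K\<bar> * norm (y - x) * norm (y - x) \<le> e * norm (y - x)"
      by (simp add: mult_right_mono)
    moreover have "K * (norm (y - x))\<^sup>2 \<le> \<bar>K\<bar> * norm (y - x) * norm (y - x)"
      using mult_right_mono[OF abs_ge_self[of K], of "norm (y - x) * norm (y - x)"]
      by (simp add: power2_eq_square mult.assoc)
    ultimately show "norm (f y - f x - D (y - x)) \<le> e * norm (y - x)"
      using remainder[of "y - x"] by simp
  qed
qed

lemma lipschitz_deriv_remainder:
  fixes f f' :: "real \<Rightarrow> real"
  assumes deriv: "\<And>t. (f has_real_derivative f' t) (at t)"
    and lip: "\<And>s t. \<bar>f' s - f' t\<bar> \<le> M * \<bar>s - t\<bar>"
  shows "\<bar>f (a + h) - f a - f' a * h\<bar> \<le> M * h\<^sup>2"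
proof -
  have "M \<ge> 0"
    using lip[of 1 0] by simp
  define g where "g t = f (a + t * h) - t * (f' a * h)" for t
  have "((\<lambda>t. f (a + t * h)) has_real_derivative f' (a + t * h) * h) (at t)" for t
    by (rule DERIV_chain2[OF deriv]) (auto intro!: derivative_eq_intros)
  then have g_deriv: "(g has_real_derivative (f' (a + t * h) - f' a) * h) (at t)" for t
    unfolding g_def by (auto intro!: derivative_eq_intros simp: algebra_simps)
  have "continuous_on {0..1} g"
    by (rule DERIV_continuous_on[OF has_field_derivative_at_within[OF g_deriv]])
  then obtain t where t: "t \<in> {0<..<1}"
    and "norm (g 1 - g 0) \<le> norm ((f' (a + t * h) - f' a) * h * (1 - 0))"
    using mvt_general[of 0 1 g "\<lambda>t s. (f' (a + t * h) - f' a) * h * s"] g_deriv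
    by (auto simp: has_field_derivative_def)
  then have "\<bar>f (a + h) - f a - f' a * h\<bar> \<le> \<bar>f' (a + t * h) - f' a\<bar> * \<bar>h\<bar>"
    by (simp add: g_def abs_mult)
  also have "\<dots> \<le> M * (t * \<bar>h\<bar>) * \<bar>h\<bar>"
    using lip[of "a + t * h" a] t by (intro mult_right_mono) (auto simp: abs_mult)
  also have "\<dots> \<le> M * \<bar>h\<bar> * \<bar>h\<bar>"
    using t \<open>M \<ge> 0\<close> by (intro mult_right_mono mult_left_mono mult_left_le_one_le) auto
  also have "\<dots> = M * h\<^sup>2"
    by (simp add: power2_eq_square)
  finally show ?thesis .
qed

text \<open>Boundedness below forces \<open>g (t0 - 1) < \<epsilon>\<close>, so \<open>g\<close> crosses \<open>\<epsilon>\<close> on \<open>[t0 - 1, t0]\<close>,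
  and \<open>f\<close> increases from the crossing point to \<open>t0\<close>.\<close>
lemma approx_min_small_deriv_right:
  fixes f g :: "real \<Rightarrow> real"
  assumes deriv: "\<And>t. (f has_real_derivative g t) (at t)"
    and "mono g" and "continuous_on UNIV g"
    and lower: "\<And>t. B \<le> f t" and "\<epsilon> > 0"
    and t0: "f t0 < B + \<epsilon>" "g t0 > \<epsilon>"
  shows "\<exists>t. f t \<le> f t0 \<and> \<bar>g t\<bar> \<le> \<epsilon>"
proof -
  obtain z where z: "t0 - 1 < z" "z < t0" "f t0 - f (t0 - 1) = g z"
    using MVT2[of "t0 - 1" t0 f g] deriv by auto
  have "g (t0 - 1) \<le> \<epsilon>"
    using monoD[OF \<open>mono g\<close>, of "t0 - 1" z] z t0 lower[of "t0 - 1"] by simp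
  then obtain t where t: "t0 - 1 \<le> t" "t \<le> t0" "g t = \<epsilon>"
    using IVT'[of g "t0 - 1" \<epsilon> t0] t0 continuous_on_subset[OF \<open>continuous_on UNIV g\<close>]
    by auto
  have "f t \<le> f t0"
  proof (rule DERIV_nonneg_imp_nondecreasing[OF \<open>t \<le> t0\<close>])
    fix s assume "t \<le> s" "s \<le> t0"
    then have "g s \<ge> 0"
      using monoD[OF \<open>mono g\<close>, of t s] t \<open>\<epsilon> > 0\<close> by simp
    then show "\<exists>y. (f has_real_derivative y) (at s) \<and> y \<ge> 0"
      using deriv by blast
  qed
  then show ?thesis
    using t \<open>\<epsilon> > 0\<close> by auto
qed

lemma approx_min_small_deriv:
  fixes f g :: "real \<Rightarrow> real"
  assumes deriv: "\<And>t. (f has_real_derivative g t) (at t)"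
    and mono: "mono g" and cont: "continuous_on UNIV g"
    and "bdd_below (range f)" and "\<delta> > 0" and "\<epsilon> > 0"
  shows "\<exists>t. f t < Inf (range f) + \<delta> \<and> \<bar>g t\<bar> \<le> \<epsilon>"
proof -
  define B where "B = Inf (range f)"
  have lower: "B \<le> f t" for t
    unfolding B_def using \<open>bdd_below (range f)\<close> by (simp add: cInf_lower)
  obtain t0 where "f t0 < B + min \<delta> \<epsilon>"
    using cInf_lessD[of "range f" "B + min \<delta> \<epsilon>"] \<open>\<delta> > 0\<close> \<open>\<epsilon> > 0\<close>
    by (auto simp: B_def)
  then have t0: "f t0 < B + \<delta>" "f t0 < B + \<epsilon>"
    by auto
  consider "\<bar>g t0\<bar> \<le> \<epsilon>" | "g t0 > \<epsilon>" | "- g t0 > \<epsilon>"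
    by linarith
  then obtain t where "f t \<le> f t0" "\<bar>g t\<bar> \<le> \<epsilon>"
  proof cases
    case 1
    then show ?thesis using that by blast
  next
    case 2
    then show ?thesis
      using that approx_min_small_deriv_right[OF deriv mono cont lower \<open>\<epsilon> > 0\<close>, of t0] t0
      by auto
  next
    case 3
    have "((\<lambda>t. f (- t)) has_real_derivative - g (- t)) (at t)" for t
      using DERIV_mirror deriv by blast
    moreover have "mono (\<lambda>t. - g (- t))"
      using mono by (simp add: monotone_on_def)
    moreover have "continuous_on UNIV (\<lambda>t. - g (- t))"
      by (intro continuous_intros continuous_on_compose2[OF cont]) auto
    ultimately obtain t where "f (- t) \<le> f (- (- t0))" "\<bar>- g (- t)\<bar> \<le> \<epsilon>"
      using approx_min_small_deriv_right[of "\<lambda>t. f (- t)" "\<lambda>t. - g (- t)" B \<epsilon> "- t0"]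
        lower t0 3 \<open>\<epsilon> > 0\<close> by auto
    then show ?thesis
      using that by auto
  qed
  then show ?thesis
    using t0 unfolding B_def by (meson le_less_trans)
qed

text \<open>The junk value of \<open>Inf\<close> on a real set that is not bounded below does not depend on the set.\<close>
lemma Inf_not_bdd_below_eq:
  fixes S T :: "real set"
  assumes "\<not> bdd_below S" "\<not> bdd_below T"
  shows "Inf S = Inf T"
proof -
  have "\<not> bdd_above (uminus ` S)" "\<not> bdd_above (uminus ` T)"
    using assms bdd_above_uminus_image[of "\<lambda>x. x"] by simp_all
  then have "(\<lambda>z. \<forall>x\<in>uminus ` S. x \<le> z) = (\<lambda>z. \<forall>x\<in>uminus ` T. x \<le> z)"
    by (auto simp: bdd_above_def fun_eq_iff)
  then show ?thesis
    unfolding Inf_real_def Sup_real_def by simp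
qed

lemma directional_quotient_tendsto:
  fixes f :: "'a::real_inner \<Rightarrow> real"
  assumes "(f has_derivative (\<lambda>h. g \<bullet> h)) (at x)"
  shows "((\<lambda>t. (f (x + t *\<^sub>R v) - f x) / t) \<longlongrightarrow> g \<bullet> v) (at_right 0)"
proof -
  have "((\<lambda>t. x + t *\<^sub>R v) has_derivative (\<lambda>t. t *\<^sub>R v)) (at 0)"
    by (auto intro!: derivative_eq_intros)
  moreover have "(f has_derivative (\<lambda>h. g \<bullet> h)) (at (x + 0 *\<^sub>R v))"
    using assms by simp
  ultimately have "((\<lambda>t. f (x + t *\<^sub>R v)) has_derivative (\<lambda>t. g \<bullet> (t *\<^sub>R v))) (at 0)"
    by (rule has_derivative_compose)
  then have "((\<lambda>t. f (x + t *\<^sub>R v)) has_real_derivative g \<bullet> v) (at 0)"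
    by (simp add: has_field_derivative_def mult_commute_abs)
  then have "((\<lambda>t. (f (x + t *\<^sub>R v) - f x) / t) \<longlongrightarrow> g \<bullet> v) (at 0)"
    by (simp add: has_field_derivative_iff)
  then show ?thesis
    by (rule tendsto_mono[rotated]) (simp add: at_within_le_at)
qed

text \<open>Differentiate the bound along \<open>y = x + t v\<close> and let \<open>t \<rightarrow> 0\<^sup>+\<close>: this gives \<open>\<parallel>v\<parallel>\<^sup>2 \<le> C \<parallel>v\<parallel>\<close>.\<close>
lemma norm_derivative_le_of_upper_bound:
  fixes f :: "'a::real_inner \<Rightarrow> real"
  assumes deriv: "(f has_derivative (\<lambda>h. v \<bullet> h)) (at x)"
    and "open S" "x \<in> S" "C \<ge> 0"
    and bound: "\<And>y. y \<in> S \<Longrightarrow> f y - f x \<le> C * norm (y - x) + K * (norm (y - x))\<^sup>2"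
  shows "norm v \<le> C"
proof -
  obtain d where "d > 0" "ball x d \<subseteq> S"
    using \<open>open S\<close> \<open>x \<in> S\<close> by (meson openE)
  have "eventually (\<lambda>t. (f (x + t *\<^sub>R v) - f x) / t \<le> C * norm v + K * t * (norm v)\<^sup>2) (at_right 0)"
    unfolding eventually_at_right_field
  proof (intro exI[of _ "d / (norm v + 1)"] conjI allI impI)
    show "0 < d / (norm v + 1)"
      using \<open>d > 0\<close> by (simp add: add_nonneg_pos)
    fix t :: real assume t: "0 < t" "t < d / (norm v + 1)"
    have "t * norm v < t * (norm v + 1)"
      using t by simp
    also have "\<dots> < d"
      using t by (simp add: pos_less_divide_eq add_nonneg_pos mult.commute)
    finally have "t * norm v < d" .
    then have "x + t *\<^sub>R v \<in> S"
      using \<open>ball x d \<subseteq> S\<close> t by (auto simp: dist_norm)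
    from bound[OF this] t
    have "f (x + t *\<^sub>R v) - f x \<le> t * (C * norm v + K * t * (norm v)\<^sup>2)"
      by (simp add: algebra_simps power2_eq_square)
    then show "(f (x + t *\<^sub>R v) - f x) / t \<le> C * norm v + K * t * (norm v)\<^sup>2"
      using t by (simp add: divide_le_eq mult.commute)
  qed
  moreover have "((\<lambda>t. C * norm v + K * t * (norm v)\<^sup>2) \<longlongrightarrow> C * norm v + K * 0 * (norm v)\<^sup>2) (at_right 0)"
    by (intro tendsto_intros)
  ultimately have "v \<bullet> v \<le> C * norm v"
    using tendsto_le[OF _ _ directional_quotient_tendsto[OF deriv]] by fastforce
  then have "norm v * norm v \<le> C * norm v"
    by (simp add: power2_norm_eq_inner[symmetric] power2_eq_square)
  then show ?thesis
    using \<open>C \<ge> 0\<close> by (cases "v = 0") auto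
qed

lemma (in prob_space) abs_integral_le_const:
  fixes f :: "'a \<Rightarrow> real"
  assumes "integrable M f" "\<And>x. \<bar>f x\<bar> \<le> B"
  shows "\<bar>integral\<^sup>L M f\<bar> \<le> B"
proof -
  have "\<bar>integral\<^sup>L M f\<bar> \<le> (\<integral>x. \<bar>f x\<bar> \<partial>M)"
    by (rule integral_abs_bound)
  also have "\<dots> \<le> B"
    using assms by (intro integral_le_const integrable_abs AE_I2)
  finally show ?thesis .
qed

lemma abs_integral_mult_le:
  fixes f h :: "'a \<Rightarrow> real"
  assumes "integrable M f" "integrable M (\<lambda>x. f x * h x)"
    and "\<And>x. f x \<ge> 0" "\<And>x. \<bar>h x\<bar> \<le> B"
  shows "\<bar>\<integral>x. f x * h x \<partial>M\<bar> \<le> B * integral\<^sup>L M f"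
proof -
  have "\<bar>\<integral>x. f x * h x \<partial>M\<bar> \<le> (\<integral>x. \<bar>f x * h x\<bar> \<partial>M)"
    by (rule integral_abs_bound)
  also have "\<dots> \<le> (\<integral>x. B * f x \<partial>M)"
  proof (rule integral_mono)
    show "integrable M (\<lambda>x. \<bar>f x * h x\<bar>)"
      using assms(2) by (rule integrable_abs)
    show "integrable M (\<lambda>x. B * f x)"
      using assms(1) by simp
    fix x
    show "\<bar>f x * h x\<bar> \<le> B * f x"
      using assms(3,4)[of x] by (simp add: abs_mult) (metis mult.commute mult_left_mono)
  qed
  also have "\<dots> = B * integral\<^sup>L M f"
    by simp
  finally show ?thesis .
qed

locale smooth_conjugate =
  fixes \<psi> :: "real \<Rightarrow> ereal" and M :: real
  assumes psi_nonneg: "\<And>t. \<psi> t \<ge> 0"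
    and psi_one: "\<psi> 1 = 0"
    and psi_neg: "\<And>t. t < 0 \<Longrightarrow> \<psi> t = \<infinity>"
    and conj_finite: "\<And>t. conj_ereal \<psi> t < \<infinity>"
    and conj_smooth: "smooth_on M (conj_real \<psi>) UNIV"
begin

abbreviation \<phi> :: "real \<Rightarrow> real" where "\<phi> \<equiv> conj_real \<psi>"
abbreviation \<phi>' :: "real \<Rightarrow> real" where "\<phi>' \<equiv> grad (conj_real \<psi>)"

lemma conj_ereal_eq: "conj_ereal \<psi> t = ereal (\<phi> t)"
proof -
  have "ereal t \<le> conj_ereal \<psi> t"
    unfolding conj_ereal_def by (rule SUP_upper2[of 1]) (simp_all add: psi_one)
  then have "\<bar>conj_ereal \<psi> t\<bar> \<noteq> \<infinity>"
    using conj_finite[of t] by (cases "conj_ereal \<psi> t") auto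
  then show ?thesis
    unfolding conj_real_def by (simp add: ereal_real')
qed

lemma affine_minorant_le: "\<psi> s = ereal p \<Longrightarrow> s * t - p \<le> \<phi> t"
  using SUP_upper[of s UNIV "\<lambda>s. ereal (s * t) - \<psi> s"]
  by (simp add: conj_ereal_def[symmetric] conj_ereal_eq)

lemma le_of_affine_minorants:
  assumes "\<And>s p. \<psi> s = ereal p \<Longrightarrow> s * t - p \<le> B"
  shows "\<phi> t \<le> B"
proof -
  have "ereal (s * t) - \<psi> s \<le> ereal B" for s
    using assms[of s] psi_nonneg[of s] by (cases "\<psi> s") auto
  then have "conj_ereal \<psi> t \<le> ereal B"
    unfolding conj_ereal_def by (rule SUP_least)
  then show ?thesis
    by (simp add: conj_ereal_eq)
qed

text \<open>Only slopes \<open>s \<ge> 0\<close> occur in the supremum defining \<open>\<phi>\<close>, because \<open>\<psi> = \<infinity>\<close> on the negative axis.\<close>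
lemma mono_phi: "mono \<phi>"
proof (rule monoI)
  fix t1 t2 :: real assume "t1 \<le> t2"
  show "\<phi> t1 \<le> \<phi> t2"
  proof (rule le_of_affine_minorants)
    fix s p assume p: "\<psi> s = ereal p"
    then have "s \<ge> 0"
      using psi_neg[of s] by force
    then have "s * t1 - p \<le> s * t2 - p"
      using \<open>t1 \<le> t2\<close> by (simp add: mult_left_mono)
    also have "\<dots> \<le> \<phi> t2"
      by (rule affine_minorant_le[OF p])
    finally show "s * t1 - p \<le> \<phi> t2" .
  qed
qed

lemma convex_phi: "convex_on UNIV \<phi>"
proof (rule convex_onI)
  fix x y u :: real assume u: "0 < u" "u < 1"
  show "\<phi> ((1 - u) *\<^sub>R x + u *\<^sub>R y) \<le> (1 - u) * \<phi> x + u * \<phi> y"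
  proof (rule le_of_affine_minorants)
    fix s p assume p: "\<psi> s = ereal p"
    have "s * ((1 - u) *\<^sub>R x + u *\<^sub>R y) - p = (1 - u) * (s * x - p) + u * (s * y - p)"
      by (simp add: algebra_simps)
    also have "\<dots> \<le> (1 - u) * \<phi> x + u * \<phi> y"
      using affine_minorant_le[OF p, of x] affine_minorant_le[OF p, of y] u
      by (intro add_mono mult_left_mono) auto
    finally show "s * ((1 - u) *\<^sub>R x + u *\<^sub>R y) - p \<le> (1 - u) * \<phi> x + u * \<phi> y" .
  qed
qed simp

lemma phi_has_real_derivative: "(\<phi> has_real_derivative \<phi>' t) (at t)"
  using conj_smooth by (intro grad_has_real_derivative) (simp add: smooth_on_def)

lemma phi'_lipschitz: "\<bar>\<phi>' s - \<phi>' t\<bar> \<le> M * \<bar>s - t\<bar>"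
  using conj_smooth by (simp add: smooth_on_def)

lemma M_nonneg: "M \<ge> 0"
  using phi'_lipschitz[of 1 0] by simp

lemma phi_above_tangent: "\<phi> b - \<phi> a \<ge> \<phi>' a * (b - a)"
  using convex_on_imp_above_tangent[OF convex_phi, of a b] phi_has_real_derivative
  by (simp add: has_field_derivative_at_within)

lemma mono_phi': "mono \<phi>'"
proof (rule monoI)
  fix a b :: real assume "a \<le> b"
  have "(\<phi>' b - \<phi>' a) * (b - a) \<ge> 0"
    using phi_above_tangent[of a b] phi_above_tangent[of b a] by (simp add: algebra_simps)
  then show "\<phi>' a \<le> \<phi>' b"
    using \<open>a \<le> b\<close> by (cases "a = b") (auto simp: zero_le_mult_iff)
qed

lemma phi'_nonneg: "\<phi>' t \<ge> 0"
  using phi_above_tangent[of t "t - 1"] monoD[OF mono_phi, of "t - 1" t] by simp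

lemma phi'_le_increment: "\<phi>' t \<le> \<phi> (t + 1) - \<phi> t"
  using phi_above_tangent[of t "t + 1"] by simp

lemma phi_remainder: "\<bar>\<phi> (a + h) - \<phi> a - \<phi>' a * h\<bar> \<le> M * h\<^sup>2"
  by (rule lipschitz_deriv_remainder[OF phi_has_real_derivative phi'_lipschitz])

end

locale dro_objective = smooth_conjugate \<psi> M + prob_space P
  for \<psi> M and P :: "'b measure" +
  fixes X :: "'a::euclidean_space set" and l :: "'a \<Rightarrow> 'b \<Rightarrow> real" and lam G :: real
  assumes open_X: "open X" and lam_pos: "lam > 0"
    and lipschitz_l: "\<And>\<xi>. G-lipschitz_on X (\<lambda>y. l y \<xi>)"
    and measurable_l: "\<And>y. y \<in> X \<Longrightarrow> (\<lambda>\<xi>. l y \<xi>) \<in> borel_measurable P"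
    and integrable_phi: "\<And>y e. y \<in> X \<Longrightarrow> integrable P (\<lambda>\<xi>. conj_real \<psi> ((l y \<xi> - e) / lam))"
begin

abbreviation L :: "'a \<Rightarrow> real \<Rightarrow> real" where "L \<equiv> Lobj P l \<psi> lam"
abbreviation \<Psi> :: "'a \<Rightarrow> real" where "\<Psi> \<equiv> PsiF P l \<psi> lam"
abbreviation u :: "'a \<Rightarrow> real \<Rightarrow> 'b \<Rightarrow> real" where "u y e \<xi> \<equiv> (l y \<xi> - e) / lam"

definition weight :: "'a \<Rightarrow> real \<Rightarrow> real" where
  "weight y e = (\<integral>\<xi>. \<phi>' (u y e \<xi>) \<partial>P)"

definition first_order :: "'a \<Rightarrow> 'a \<Rightarrow> real \<Rightarrow> real" where
  "first_order y z e = (\<integral>\<xi>. \<phi>' (u y e \<xi>) * (l z \<xi> - l y \<xi>) \<partial>P)"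

lemma G_nonneg: "G \<ge> 0"
  using lipschitz_l by (auto simp: lipschitz_on_def)

lemma l_lipschitz: "y \<in> X \<Longrightarrow> z \<in> X \<Longrightarrow> \<bar>l z \<xi> - l y \<xi>\<bar> \<le> G * norm (z - y)"
  using lipschitz_l by (auto simp: lipschitz_on_def dist_real_def dist_norm)

lemma measurable_phi': "y \<in> X \<Longrightarrow> (\<lambda>\<xi>. \<phi>' (u y e \<xi>)) \<in> borel_measurable P"
  using measurable_l by (intro measurable_compose[OF _ borel_measurable_mono[OF mono_phi']]) auto

text \<open>\<open>\<phi>'\<close> is dominated by the increment of \<open>\<phi>\<close>, whose integrability is assumed.\<close>
lemma integrable_phi':
  assumes "y \<in> X"
  shows "integrable P (\<lambda>\<xi>. \<phi>' (u y e \<xi>))"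
proof (rule Bochner_Integration.integrable_bound)
  have "u y (e - lam) \<xi> = u y e \<xi> + 1" for \<xi>
    using lam_pos by (simp add: field_simps)
  then show "integrable P (\<lambda>\<xi>. \<phi> (u y e \<xi> + 1) - \<phi> (u y e \<xi>))"
    using integrable_phi[OF assms, of "e - lam"] integrable_phi[OF assms, of e] by auto
  show "AE \<xi> in P. norm (\<phi>' (u y e \<xi>)) \<le> norm (\<phi> (u y e \<xi> + 1) - \<phi> (u y e \<xi>))"
    using phi'_le_increment phi'_nonneg by (intro AE_I2) (smt (verit) real_norm_def)
qed (rule measurable_phi'[OF assms])

lemma integrable_first_order:
  assumes "y \<in> X" "z \<in> X"
  shows "integrable P (\<lambda>\<xi>. \<phi>' (u y e \<xi>) * (l z \<xi> - l y \<xi>))"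
proof (rule Bochner_Integration.integrable_bound)
  show "integrable P (\<lambda>\<xi>. \<phi>' (u y e \<xi>) * (G * norm (z - y)))"
    using integrable_phi'[OF assms(1)] by simp
  show "(\<lambda>\<xi>. \<phi>' (u y e \<xi>) * (l z \<xi> - l y \<xi>)) \<in> borel_measurable P"
    using measurable_phi' measurable_l assms by measurable
  show "AE \<xi> in P. norm (\<phi>' (u y e \<xi>) * (l z \<xi> - l y \<xi>)) \<le> norm (\<phi>' (u y e \<xi>) * (G * norm (z - y)))"
    using phi'_nonneg l_lipschitz[OF assms] G_nonneg
    by (intro AE_I2) (simp add: abs_mult mult_left_mono)
qed

lemma L_eq: "y \<in> X \<Longrightarrow> L y e = lam * (\<integral>\<xi>. \<phi> (u y e \<xi>) \<partial>P) + e"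
  unfolding Lobj_def using integrable_phi[of y e] prob_space by simp

lemma L_remainder:
  assumes y: "y \<in> X" and z: "z \<in> X"
  shows "\<bar>L z e' - L y e - first_order y z e - (1 - weight y e) * (e' - e)\<bar>
      \<le> M / lam * (G * norm (z - y) + \<bar>e' - e\<bar>)\<^sup>2"
proof -
  define d where "d \<xi> = u z e' \<xi> - u y e \<xi>" for \<xi>
  define R where "R \<xi> = \<phi> (u z e' \<xi>) - \<phi> (u y e \<xi>) - \<phi>' (u y e \<xi>) * d \<xi>" for \<xi>
  have d_eq: "d \<xi> = ((l z \<xi> - l y \<xi>) - (e' - e)) / lam" for \<xi>
    unfolding d_def by (simp add: diff_divide_distrib)
  have int_d: "integrable P (\<lambda>\<xi>. \<phi>' (u y e \<xi>) * d \<xi>)"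
    using integrable_first_order[OF y z, of e] integrable_phi'[OF y, of e]
    by (simp add: d_eq right_diff_distrib)
  have int_first_order: "(\<integral>\<xi>. \<phi>' (u y e \<xi>) * d \<xi> \<partial>P) = (first_order y z e - (e' - e) * weight y e) / lam"
    using integrable_first_order[OF y z, of e] integrable_phi'[OF y, of e]
    by (simp add: d_eq first_order_def weight_def right_diff_distrib mult.commute)
  have "(\<integral>\<xi>. R \<xi> \<partial>P) = (\<integral>\<xi>. \<phi> (u z e' \<xi>) \<partial>P) - (\<integral>\<xi>. \<phi> (u y e \<xi>) \<partial>P)
      - (\<integral>\<xi>. \<phi>' (u y e \<xi>) * d \<xi> \<partial>P)"
    using integrable_phi[OF y, of e] integrable_phi[OF z, of e'] int_d by (simp add: R_def)
  moreover have "lam * (\<integral>\<xi>. \<phi>' (u y e \<xi>) * d \<xi> \<partial>P) = first_order y z e - (e' - e) * weight y e"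
    using int_first_order lam_pos by simp
  ultimately have "lam * (\<integral>\<xi>. R \<xi> \<partial>P) = lam * (\<integral>\<xi>. \<phi> (u z e' \<xi>) \<partial>P) - lam * (\<integral>\<xi>. \<phi> (u y e \<xi>) \<partial>P)
      - (first_order y z e - (e' - e) * weight y e)"
    by (simp add: right_diff_distrib)
  then have "L z e' - L y e - first_order y z e - (1 - weight y e) * (e' - e) = lam * (\<integral>\<xi>. R \<xi> \<partial>P)"
    by (simp add: L_eq[OF y] L_eq[OF z] algebra_simps)
  moreover have "\<bar>\<integral>\<xi>. R \<xi> \<partial>P\<bar> \<le> M * ((G * norm (z - y) + \<bar>e' - e\<bar>) / lam)\<^sup>2"
  proof (rule abs_integral_le_const)
    show "integrable P R"
      using integrable_phi[OF y, of e] integrable_phi[OF z, of e'] int_d unfolding R_def[abs_def] by simp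
    fix \<xi>
    have "\<bar>d \<xi>\<bar> \<le> (G * norm (z - y) + \<bar>e' - e\<bar>) / lam"
      unfolding d_eq using l_lipschitz[OF y z, of \<xi>] lam_pos
      by (simp add: abs_div divide_right_mono)
    then have "(d \<xi>)\<^sup>2 \<le> ((G * norm (z - y) + \<bar>e' - e\<bar>) / lam)\<^sup>2"
      by (metis abs_ge_zero abs_le_square_iff abs_of_nonneg order.trans)
    then show "\<bar>R \<xi>\<bar> \<le> M * ((G * norm (z - y) + \<bar>e' - e\<bar>) / lam)\<^sup>2"
      using phi_remainder[of "u y e \<xi>" "d \<xi>"] mult_left_mono[OF _ M_nonneg] d_def
      unfolding R_def by fastforce
  qed
  ultimately show ?thesis
    using lam_pos by (simp add: abs_mult power_divide power2_eq_square field_simps)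
qed

lemma has_real_derivative_L_eta:
  assumes "y \<in> X"
  shows "((\<lambda>e. L y e) has_real_derivative 1 - weight y e) (at e)"
  unfolding has_field_derivative_def
proof (rule has_derivative_of_quadratic_remainder)
  show "bounded_linear ((*) (1 - weight y e))"
    by (rule bounded_linear_mult_right)
  fix h :: real
  show "norm (L y (e + h) - L y e - (1 - weight y e) * h) \<le> M / lam * (norm h)\<^sup>2"
    using L_remainder[OF assms assms, of "e + h" e] by (simp add: first_order_def)
qed

lemma weight_antimono:
  assumes "y \<in> X" "e \<le> e'"
  shows "weight y e' \<le> weight y e"
  unfolding weight_def using assms lam_pos
  by (intro integral_mono integrable_phi' monoD[OF mono_phi'] divide_right_mono) auto

lemma weight_lipschitz:
  assumes "y \<in> X"
  shows "\<bar>weight y e - weight y e'\<bar> \<le> M / lam * \<bar>e - e'\<bar>"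
proof -
  have "weight y e - weight y e' = (\<integral>\<xi>. \<phi>' (u y e \<xi>) - \<phi>' (u y e' \<xi>) \<partial>P)"
    unfolding weight_def using integrable_phi'[OF assms] by simp
  also have "\<bar>\<dots>\<bar> \<le> M / lam * \<bar>e - e'\<bar>"
  proof (rule abs_integral_le_const)
    show "integrable P (\<lambda>\<xi>. \<phi>' (u y e \<xi>) - \<phi>' (u y e' \<xi>))"
      using integrable_phi'[OF assms] by simp
    fix \<xi>
    have "u y e \<xi> - u y e' \<xi> = (e' - e) / lam"
      by (simp add: diff_divide_distrib)
    then show "\<bar>\<phi>' (u y e \<xi>) - \<phi>' (u y e' \<xi>)\<bar> \<le> M / lam * \<bar>e - e'\<bar>"
      using phi'_lipschitz[of "u y e \<xi>" "u y e' \<xi>"] lam_pos by (simp add: abs_minus_commute)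
  qed
  finally show ?thesis .
qed

text \<open>Since \<open>\<phi>'\<close> is monotone, \<open>\<phi>' (u y e) - \<phi>' (u y e')\<close> has constant sign, so only its integral matters.\<close>
lemma first_order_diff_le:
  assumes "y \<in> X" "z \<in> X"
  shows "\<bar>first_order y z e - first_order y z e'\<bar> \<le> G * norm (z - y) * \<bar>weight y e - weight y e'\<bar>"
proof -
  have *: "\<bar>first_order y z e - first_order y z e'\<bar> \<le> G * norm (z - y) * (weight y e - weight y e')"
    if "e \<le> e'" for e e'
  proof -
    define D where "D \<xi> = \<phi>' (u y e \<xi>) - \<phi>' (u y e' \<xi>)" for \<xi>
    have "first_order y z e - first_order y z e' = (\<integral>\<xi>. D \<xi> * (l z \<xi> - l y \<xi>) \<partial>P)"
      unfolding first_order_def D_def left_diff_distrib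
      using integrable_first_order[OF assms, of e] integrable_first_order[OF assms, of e'] by (rule Bochner_Integration.integral_diff[symmetric])
    also have "\<bar>\<dots>\<bar> \<le> G * norm (z - y) * integral\<^sup>L P D"
    proof (rule abs_integral_mult_le)
      show "integrable P D"
        unfolding D_def[abs_def]
        using integrable_phi'[OF assms(1), of e] integrable_phi'[OF assms(1), of e']
        by (rule Bochner_Integration.integrable_diff)
      show "integrable P (\<lambda>\<xi>. D \<xi> * (l z \<xi> - l y \<xi>))"
        unfolding D_def left_diff_distrib
        using integrable_first_order[OF assms, of e] integrable_first_order[OF assms, of e'] by (rule Bochner_Integration.integrable_diff)
      show "D \<xi> \<ge> 0" for \<xi>
        using monoD[OF mono_phi', of "u y e' \<xi>" "u y e \<xi>"] that lam_pos
        by (simp add: D_def divide_right_mono)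
      show "\<bar>l z \<xi> - l y \<xi>\<bar> \<le> G * norm (z - y)" for \<xi>
        by (rule l_lipschitz[OF assms])
    qed
    also have "integral\<^sup>L P D = weight y e - weight y e'"
      unfolding weight_def D_def[abs_def]
      using integrable_phi'[OF assms(1), of e] integrable_phi'[OF assms(1), of e']
      by (rule Bochner_Integration.integral_diff)
    finally show ?thesis .
  qed
  show ?thesis
  proof (cases "e \<le> e'")
    case True
    then show ?thesis
      using *[OF True] weight_antimono[OF assms(1) True] by simp
  next
    case False
    then show ?thesis
      using *[of e' e] weight_antimono[OF assms(1), of e' e] by (simp add: abs_minus_commute)
  qed
qed

lemma L_shift_le:
  assumes "y \<in> X" "z \<in> X"
  shows "L y (e + G * norm (z - y)) - G * norm (z - y) \<le> L z e"
proof -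
  have "u y (e + G * norm (z - y)) \<xi> \<le> u z e \<xi>" for \<xi>
    using l_lipschitz[OF assms, of \<xi>] lam_pos by (simp add: divide_right_mono abs_le_iff)
  then have "(\<integral>\<xi>. \<phi> (u y (e + G * norm (z - y)) \<xi>) \<partial>P) \<le> (\<integral>\<xi>. \<phi> (u z e \<xi>) \<partial>P)"
    using integrable_phi[OF assms(1)] integrable_phi[OF assms(2)]
    by (intro integral_mono monoD[OF mono_phi])
  then show ?thesis
    using lam_pos by (simp add: L_eq assms)
qed

lemma bdd_below_L_transfer:
  assumes "y \<in> X" "z \<in> X" "bdd_below (range (L y))"
  shows "bdd_below (range (L z))"
proof -
  obtain B where B: "\<And>e. B \<le> L y e"
    using assms(3) by (auto simp: bdd_below_def)
  have "B - G * norm (z - y) \<le> L z e" for e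
    using L_shift_le[OF assms(1,2), of e] B[of "e + G * norm (z - y)"] by linarith
  then show ?thesis
    by (meson bdd_belowI2)
qed

text \<open>Compare \<open>\<Psi> y \<le> L y e\<close> with \<open>\<Psi> x > L x e - r\<^sup>2\<close> at a near-minimiser \<open>e\<close> of \<open>L x\<close> with
  \<open>\<bar>\<partial>\<^sub>\<eta> L x e\<bar> \<le> r = \<parallel>y - x\<parallel>\<close>, then move the first-order term from \<open>e\<close> to \<open>\<eta>\<close>.\<close>
lemma Psi_diff_le:
  assumes x: "x \<in> X" and y: "y \<in> X" and bdd: "bdd_below (range (L x))"
  shows "\<Psi> y - \<Psi> x \<le> L y \<eta> - L x \<eta> + G * \<bar>1 - weight x \<eta>\<bar> * norm (y - x)
           + (G + 2 * M * G\<^sup>2 / lam + 1) * (norm (y - x))\<^sup>2"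
proof (cases "y = x")
  case False
  define r where "r = norm (y - x)"
  define q where "q = \<bar>1 - weight x \<eta>\<bar>"
  define A where "A = M * G\<^sup>2 * r\<^sup>2 / lam"
  have "r > 0"
    using False by (simp add: r_def)
  have "mono (\<lambda>e. 1 - weight x e)"
    by (rule monoI) (simp add: weight_antimono[OF x])
  moreover have "(M / lam)-lipschitz_on UNIV (\<lambda>e. 1 - weight x e)"
    using weight_lipschitz[OF x] M_nonneg lam_pos
    by (intro lipschitz_onI) (auto simp: dist_real_def abs_minus_commute)
  ultimately obtain e where e: "L x e < Inf (range (L x)) + r\<^sup>2" "\<bar>1 - weight x e\<bar> \<le> r"
    using approx_min_small_deriv[OF has_real_derivative_L_eta[OF x] _ lipschitz_on_continuous_on bdd]
      \<open>r > 0\<close> by (metis zero_less_power)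
  have "\<Psi> y \<le> L y e"
    unfolding PsiF_def by (rule cInf_lower[OF _ bdd_below_L_transfer[OF x y bdd]]) simp
  moreover have "L x e - r\<^sup>2 < \<Psi> x"
    using e(1) by (simp add: PsiF_def)
  moreover have "M / lam * (G * norm (y - x) + 0)\<^sup>2 = A"
    by (simp add: A_def r_def power_mult_distrib)
  then have "L y e - L x e \<le> first_order x y e + A"
    and "first_order x y \<eta> \<le> L y \<eta> - L x \<eta> + A"
    using L_remainder[OF x y, of e e] L_remainder[OF x y, of \<eta> \<eta>] by (simp_all add: abs_le_iff)
  moreover have "first_order x y e \<le> first_order x y \<eta> + G * r * (q + r)"
  proof -
    have "\<bar>weight x e - weight x \<eta>\<bar> \<le> q + r"
      using e(2) by (simp add: q_def)
    then have "G * r * \<bar>weight x e - weight x \<eta>\<bar> \<le> G * r * (q + r)"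
      using G_nonneg \<open>r > 0\<close> by (intro mult_left_mono) auto
    then show ?thesis
      using first_order_diff_le[OF x y, of e \<eta>] by (simp add: r_def)
  qed
  moreover have "G * r * (q + r) = G * q * r + G * r\<^sup>2"
    by (simp add: algebra_simps power2_eq_square)
  moreover have "(G + 2 * M * G\<^sup>2 / lam + 1) * r\<^sup>2 = G * r\<^sup>2 + 2 * A + r\<^sup>2"
    by (simp add: A_def field_simps)
  ultimately show ?thesis
    unfolding r_def[symmetric] q_def[symmetric] by linarith
qed simp

text \<open>If \<open>L x\<close> is unbounded below, then so is every \<open>L y\<close>, and \<open>\<Psi>\<close> is the junk value
  \<open>Inf\<close> of an unbounded set throughout \<open>X\<close>, hence locally constant.\<close>
lemma norm_grad_Psi_le:
  assumes x: "x \<in> X" and "\<Psi> differentiable (at x)"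
    and L_deriv: "((\<lambda>y. L y \<eta>) has_derivative (\<lambda>h. a \<bullet> h)) (at x)"
  shows "norm (grad \<Psi> x) \<le> norm a + G * \<bar>1 - weight x \<eta>\<bar>"
proof (cases "bdd_below (range (L x))")
  case True
  have "((\<lambda>y. \<Psi> y - L y \<eta>) has_derivative (\<lambda>h. (grad \<Psi> x - a) \<bullet> h)) (at x)"
    using has_derivative_diff[OF grad_has_derivative[OF assms(2)] L_deriv]
    by (simp add: inner_diff_left)
  then have "norm (grad \<Psi> x - a) \<le> G * \<bar>1 - weight x \<eta>\<bar>"
    using Psi_diff_le[OF x _ True] open_X x G_nonneg
    by (intro norm_derivative_le_of_upper_bound[where K = "G + 2 * M * G\<^sup>2 / lam + 1"])
      (auto simp: algebra_simps)
  then show ?thesis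
    using norm_triangle_sub[of "grad \<Psi> x" a] by linarith
next
  case False
  then have "\<not> bdd_below (range (L y))" if "y \<in> X" for y
    using bdd_below_L_transfer[OF that x] by auto
  then have "\<Psi> x = \<Psi> y" if "y \<in> X" for y
    unfolding PsiF_def using that x by (intro Inf_not_bdd_below_eq) auto
  then have "(\<Psi> has_derivative (\<lambda>h. 0)) (at x)"
    by (rule has_derivative_transform_within_open[OF has_derivative_const open_X x])
  then have "grad \<Psi> x = 0"
    by (intro grad_unique) simp
  then show ?thesis
    using G_nonneg by simp
qed

lemma norm_grad_Psi_le_partials:
  assumes x: "x \<in> X" and "\<Psi> differentiable (at x)"
    and "(\<lambda>y. L y \<eta>) differentiable (at x)"
  shows "norm (grad \<Psi> x) \<le> norm (grad (\<lambda>y. L y \<eta>) x) + G * \<bar>grad (\<lambda>e. L x e) \<eta>\<bar>"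
  using norm_grad_Psi_le[OF assms(1,2) grad_has_derivative[OF assms(3)]]
    grad_real_unique[OF has_real_derivative_L_eta[OF x]] by simp

lemma norm_grad_Psi_le_rescaled:
  assumes x: "x \<in> X" and "\<Psi> differentiable (at x)"
    and "(\<lambda>(y, e). L y (G * e)) differentiable (at (x, \<eta>))"
  shows "norm (grad \<Psi> x) \<le> sqrt 2 * norm (grad (\<lambda>(y, e). L y (G * e)) (x, \<eta>))"
proof -
  define w where "w = grad (\<lambda>(y, e). L y (G * e)) (x, \<eta>)"
  have "((\<lambda>(y, e). L y (G * e)) has_derivative (\<lambda>h. w \<bullet> h)) (at (x, \<eta>))"
    unfolding w_def using assms(3) by (rule grad_has_derivative)
  note partials = has_derivative_partials[OF this]
  have x_deriv: "((\<lambda>y. L y (G * \<eta>)) has_derivative (\<lambda>h. fst w \<bullet> h)) (at x)"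
    using partials(1) by simp
  have "((\<lambda>e. L x (G * e)) has_real_derivative (1 - weight x (G * \<eta>)) * G) (at \<eta>)"
    by (rule DERIV_chain2[OF has_real_derivative_L_eta[OF x]]) (auto intro!: derivative_eq_intros)
  moreover have "grad (\<lambda>e. L x (G * e)) \<eta> = snd w"
    using grad_unique[OF partials(2)] by simp
  ultimately have "snd w = (1 - weight x (G * \<eta>)) * G"
    using grad_real_unique by simp
  then have "norm (snd w) = G * \<bar>1 - weight x (G * \<eta>)\<bar>"
    using G_nonneg by (simp add: abs_mult)
  then have "norm (grad \<Psi> x) \<le> norm (fst w) + norm (snd w)"
    using norm_grad_Psi_le[OF assms(1,2) x_deriv] by simp
  also have "\<dots> \<le> sqrt 2 * norm w"
    by (rule norm_fst_add_norm_snd_le)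
  finally show ?thesis
    by (simp add: w_def)
qed

end

theorem theorem2p7:
  fixes P :: "'b measure" and X :: "'a::euclidean_space set"
    and l :: "'a \<Rightarrow> 'b \<Rightarrow> real" and \<psi> :: "real \<Rightarrow> ereal"
    and lam G Ls M \<epsilon> :: real and x :: 'a and \<eta> :: real
  assumes "prob_space P"
    and "open X"
    and "lam > 0"
    and lip: "\<forall>\<xi>. G-lipschitz_on X (\<lambda>y. l y \<xi>)"
    and smooth: "\<forall>\<xi>. smooth_on Ls (\<lambda>y. l y \<xi>) X"
    and meas: "\<forall>y\<in>X. (\<lambda>\<xi>. l y \<xi>) \<in> borel_measurable P"
    and psi_nonneg: "\<forall>t. \<psi> t \<ge> 0"
    and psi_convex: "ereal_convex \<psi>"
    and psi_one: "\<psi> 1 = 0"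
    and psi_neg: "\<forall>t<0. \<psi> t = \<infinity>"
    and conj_finite: "\<forall>t. conj_ereal \<psi> t < \<infinity>"
    and conj_smooth: "smooth_on M (conj_real \<psi>) UNIV"
    and integ: "\<forall>y\<in>X. \<forall>e. integrable P (\<lambda>\<xi>. conj_real \<psi> ((l y \<xi> - e) / lam))"
    and "x \<in> X"
    and Psi_diff: "PsiF P l \<psi> lam differentiable (at x)"
  shows "((\<lambda>y. Lobj P l \<psi> lam y \<eta>) differentiable (at x) \<and>
          (\<lambda>e. Lobj P l \<psi> lam x e) differentiable (at \<eta>) \<and>
          norm (grad (\<lambda>y. Lobj P l \<psi> lam y \<eta>) x) + G * \<bar>grad (\<lambda>e. Lobj P l \<psi> lam x e) \<eta>\<bar> \<le> \<epsilon>
          \<longrightarrow> norm (grad (PsiF P l \<psi> lam) x) \<le> \<epsilon>)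
       \<and> ((\<lambda>(y, e). Lobj P l \<psi> lam y (G * e)) differentiable (at (x, \<eta>)) \<and>
          norm (grad (\<lambda>(y, e). Lobj P l \<psi> lam y (G * e)) (x, \<eta>)) \<le> \<epsilon> / sqrt 2
          \<longrightarrow> norm (grad (PsiF P l \<psi> lam) x) \<le> \<epsilon>)"
proof -
  interpret dro_objective \<psi> M P X l lam G
    using assms unfolding dro_objective_def dro_objective_axioms_def smooth_conjugate_def
    by auto
  have "sqrt 2 * norm (grad (\<lambda>(y, e). L y (G * e)) (x, \<eta>)) \<le> \<epsilon>"
    if "norm (grad (\<lambda>(y, e). L y (G * e)) (x, \<eta>)) \<le> \<epsilon> / sqrt 2"
    using mult_left_mono[OF that, of "sqrt 2"] by simp
  then show ?thesis
    using norm_grad_Psi_le_partials[OF \<open>x \<in> X\<close> Psi_diff]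
      norm_grad_Psi_le_rescaled[OF \<open>x \<in> X\<close> Psi_diff]
    by (meson order.trans)
qed

end
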